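(* For any convex body $K\subset\mathbb{R}^d$ with $o\in\mathrm{int}(K)$ and any $\lambda>0$, \[P(K,\lambda)\le(\lambda+1)^d\,\frac{\mathrm{vol}\bigl(\tfrac12(K-K)\bigr)}{\mathrm{vol}(K\cap-K)}.\]
   Context: A convex body is a compact convex set with non-empty interior. For a convex body $L$ with $o\in\mathrm{int}(L)$, $\|x\|_L=\inf\{\mu>0:x\in\mu L\}$. Both $K\cap -K$ and $\tfrac12(K-K)$ are $o$-symmetric convex bodies containing $o$ in their interior. $P(K,\lambda)$ is the maximum number of points $p_1,\dots,p_m$ in $\mathbb{R}^d$ such that \[\frac{\max\{\|p_i-p_j\|_{\frac12(K-K)}:1\le i<j\le m\}}{\min\{\|p_i-p_j\|_{K\cap-K}:1\le i<j\le m\}}\le\lambda.\] *)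

theory Defs
  imports "HOL-Analysis.Analysis"
begin

definition convex_body :: "'a::euclidean_space set \<Rightarrow> bool" where
  "convex_body K \<longleftrightarrow> compact K \<and> convex K \<and> interior K \<noteq> {}"

definition gauge_norm :: "'a::euclidean_space set \<Rightarrow> 'a \<Rightarrow> real" where
  "gauge_norm L x = Inf {\<mu>. \<mu> > 0 \<and> x \<in> (\<lambda>y. \<mu> *\<^sub>R y) ` L}"

definition half_diff :: "'a::euclidean_space set \<Rightarrow> 'a set" where
  "half_diff K = (\<lambda>x. (1/2::real) *\<^sub>R x) ` {x - y | x y. x \<in> K \<and> y \<in> K}"

definition sym_inter :: "'a::euclidean_space set \<Rightarrow> 'a set" where
  "sym_inter K = K \<inter> uminus ` K"

text \<open>A finite point set S (distinct points p_1..p_m) is admissible for (K, lambda) if the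
  maximal pairwise distance in the norm of half_diff K is at most lambda times the minimal
  pairwise distance in the norm of sym_inter K (vacuous for fewer than two points).\<close>
definition admissible :: "'a::euclidean_space set \<Rightarrow> real \<Rightarrow> 'a set \<Rightarrow> bool" where
  "admissible K lam S \<longleftrightarrow>
     (\<forall>p\<in>S. \<forall>q\<in>S. \<forall>r\<in>S. \<forall>s\<in>S. p \<noteq> q \<longrightarrow> r \<noteq> s \<longrightarrow>
        gauge_norm (half_diff K) (p - q) \<le> lam * gauge_norm (sym_inter K) (r - s))"

end

theory Submission
  imports Defs
begin

text \<open>Put \<open>C = K \<inter> -K\<close> and \<open>D = (K - K)/2\<close>, so that \<open>C \<subseteq> D\<close> are convex and \<open>C\<close> is symmetric.
  If the points of \<open>S\<close> have pairwise \<open>C\<close>-distance at least \<open>\<delta>\<close> and \<open>D\<close>-distance at most \<open>\<lambda>\<delta>\<close>, the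
  open translates \<open>p + (\<delta>/2) int C\<close> are pairwise disjoint, so their union \<open>U\<close> has volume
  \<open>|S| (\<delta>/2)\<^sup>d vol C\<close>, while the midpoint set \<open>(U - U)/2\<close> lies in \<open>(\<lambda> + 1)(\<delta>/2) D\<close>. The
  Brunn-Minkowski inequality in the form \<open>min (vol A) (vol B) \<le> vol ((A + B)/2)\<close>, applied to
  \<open>A = U\<close> and \<open>B = -U\<close>, gives \<open>vol U \<le> ((\<lambda> + 1) \<delta>/2)\<^sup>d vol D\<close>. This form of Brunn-Minkowski
  is proved for finite unions of non-overlapping boxes by the Hadwiger-Ohmann cutting argument and
  extended to bounded open sets by inner approximation.\<close>

definition midpoints :: "'a::real_vector set \<Rightarrow> 'a set \<Rightarrow> 'a set" where
  "midpoints A B = (\<lambda>(x, y). (1/2::real) *\<^sub>R x + (1/2::real) *\<^sub>R y) ` (A \<times> B)"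

lemma midpointsI: "x \<in> A \<Longrightarrow> y \<in> B \<Longrightarrow> (1/2::real) *\<^sub>R x + (1/2::real) *\<^sub>R y \<in> midpoints A B"
  unfolding midpoints_def by force

lemma midpointsE:
  assumes "z \<in> midpoints A B"
  obtains x y where "x \<in> A" "y \<in> B" "z = (1/2::real) *\<^sub>R x + (1/2::real) *\<^sub>R y"
  using assms unfolding midpoints_def by auto

lemma midpoints_mono: "A \<subseteq> A' \<Longrightarrow> B \<subseteq> B' \<Longrightarrow> midpoints A B \<subseteq> midpoints A' B'"
  unfolding midpoints_def by auto

lemma midpoints_commute: "midpoints A B = midpoints B A"
  by (auto elim!: midpointsE) (metis add.commute midpointsI)+

lemma compact_midpoints:
  fixes A B :: "'a::real_normed_vector set"
  shows "compact A \<Longrightarrow> compact B \<Longrightarrow> compact (midpoints A B)"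
  unfolding midpoints_def case_prod_unfold
  by (intro compact_continuous_image compact_Times continuous_intros)

lemma open_midpoints:
  fixes A B :: "'a::real_normed_vector set"
  assumes "open A"
  shows "open (midpoints A B)"
proof -
  have "midpoints A B = (\<Union>y\<in>B. (\<lambda>x. (1/2::real) *\<^sub>R y + (1/2::real) *\<^sub>R x) ` A)"
    by (auto elim!: midpointsE) (metis add.commute midpointsI)
  then show ?thesis
    using assms by (auto intro!: open_affinity)
qed

lemma bounded_midpoints:
  fixes A B :: "'a::euclidean_space set"
  assumes "bounded A" "bounded B"
  shows "bounded (midpoints A B)"
proof -
  have "compact (midpoints (closure A) (closure B))"
    using assms by (simp add: compact_midpoints)
  then show ?thesis
    by (rule bounded_subset[OF compact_imp_bounded midpoints_mono]) (auto simp: closure_subset[THEN subsetD])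
qed

section \<open>Cutting by coordinate hyperplanes\<close>

lemma measure_Int_halfspaces_split:
  fixes S :: "'a::euclidean_space set"
  assumes "compact S" "k \<in> Basis"
  shows "measure lebesgue S
           = measure lebesgue (S \<inter> {x. x\<bullet>k \<le> c}) + measure lebesgue (S \<inter> {x. x\<bullet>k \<ge> c})"
proof -
  have "S \<inter> {x. x\<bullet>k \<le> c} \<in> lmeasurable" "S \<inter> {x. x\<bullet>k \<ge> c} \<in> lmeasurable"
    by (intro lmeasurable_compact compact_Int_closed assms closed_halfspace_component_le
        closed_halfspace_component_ge)+
  moreover have "negligible ((S \<inter> {x. x\<bullet>k \<le> c}) \<inter> (S \<inter> {x. x\<bullet>k \<ge> c}))"
    by (rule negligible_subset[OF negligible_standard_hyperplane[OF assms(2), of c]]) auto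
  moreover have "S = (S \<inter> {x. x\<bullet>k \<le> c}) \<union> (S \<inter> {x. x\<bullet>k \<ge> c})"
    by auto
  ultimately show ?thesis
    by (metis measure_Un3 negligible_imp_measure0 diff_zero)
qed

lemma measure_midpoints_Int_halfspaces:
  fixes A B :: "'a::euclidean_space set"
  assumes "compact A" "compact B" "k \<in> Basis"
  shows "measure lebesgue (midpoints (A \<inter> {x. x\<bullet>k \<le> c}) (B \<inter> {x. x\<bullet>k \<le> c'}))
         + measure lebesgue (midpoints (A \<inter> {x. x\<bullet>k \<ge> c}) (B \<inter> {x. x\<bullet>k \<ge> c'}))
         \<le> measure lebesgue (midpoints A B)"
proof -
  define M where "M = midpoints A B"
  define m where "m = (c + c') / 2"
  have cM: "compact M"
    unfolding M_def using assms by (simp add: compact_midpoints)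
  have "midpoints (A \<inter> {x. x\<bullet>k \<le> c}) (B \<inter> {x. x\<bullet>k \<le> c'}) \<subseteq> M \<inter> {x. x\<bullet>k \<le> m}"
    "midpoints (A \<inter> {x. x\<bullet>k \<ge> c}) (B \<inter> {x. x\<bullet>k \<ge> c'}) \<subseteq> M \<inter> {x. x\<bullet>k \<ge> m}"
    by (auto elim!: midpointsE intro: midpointsI simp: M_def m_def inner_add_left)
  then have "measure lebesgue (midpoints (A \<inter> {x. x\<bullet>k \<le> c}) (B \<inter> {x. x\<bullet>k \<le> c'}))
               \<le> measure lebesgue (M \<inter> {x. x\<bullet>k \<le> m})"
    "measure lebesgue (midpoints (A \<inter> {x. x\<bullet>k \<ge> c}) (B \<inter> {x. x\<bullet>k \<ge> c'}))
               \<le> measure lebesgue (M \<inter> {x. x\<bullet>k \<ge> m})"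
    by (auto intro!: measure_mono_fmeasurable fmeasurableD lmeasurable_compact compact_midpoints
        compact_Int_closed assms cM closed_halfspace_component_le closed_halfspace_component_ge)
  moreover have "measure lebesgue M
                   = measure lebesgue (M \<inter> {x. x\<bullet>k \<le> m}) + measure lebesgue (M \<inter> {x. x\<bullet>k \<ge> m})"
    using cM assms(3) by (rule measure_Int_halfspaces_split)
  ultimately show ?thesis
    unfolding M_def by linarith
qed

lemma measure_cbox_slab_le:
  fixes a :: "'a::euclidean_space"
  assumes "k \<in> Basis" "c1 \<le> c2"
  shows "measure lebesgue (cbox (-a) a \<inter> {x. x\<bullet>k \<le> c2} \<inter> {x. x\<bullet>k \<ge> c1})
           \<le> (\<Prod>i\<in>Basis-{k}. \<bar>2 * (a\<bullet>i)\<bar>) * (c2 - c1)"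
proof -
  define u :: 'a where "u = (\<Sum>i\<in>Basis. (if i = k then max ((-a)\<bullet>k) c1 else (-a)\<bullet>i) *\<^sub>R i)"
  define v :: 'a where "v = (\<Sum>i\<in>Basis. (if i = k then min (a\<bullet>k) c2 else a\<bullet>i) *\<^sub>R i)"
  have "cbox (-a) a \<inter> {x. x\<bullet>k \<le> c2} \<inter> {x. x\<bullet>k \<ge> c1} = cbox u v"
    unfolding u_def v_def interval_split(1)[OF assms(1)] by (rule interval_split(2)[OF assms(1)])
  moreover have "measure lebesgue (cbox u v) \<le> (\<Prod>i\<in>Basis-{k}. \<bar>2 * (a\<bullet>i)\<bar>) * (c2 - c1)"
  proof (cases "\<forall>i\<in>Basis. u\<bullet>i \<le> v\<bullet>i")
    case False
    then show ?thesis
      using assms(2) by (auto simp: content_cbox_cases prod_nonneg)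
  next
    case True
    have uv: "u\<bullet>i = (if i = k then max ((-a)\<bullet>k) c1 else (-a)\<bullet>i)"
      "v\<bullet>i = (if i = k then min (a\<bullet>k) c2 else a\<bullet>i)" if "i \<in> Basis" for i
      unfolding u_def v_def using that by (simp_all add: inner_sum_left_Basis)
    have "(\<Prod>i\<in>Basis-{k}. v\<bullet>i - u\<bullet>i) = (\<Prod>i\<in>Basis-{k}. \<bar>2 * (a\<bullet>i)\<bar>)"
    proof (rule prod.cong[OF refl])
      fix i assume i: "i \<in> Basis - {k}"
      then have "u\<bullet>i \<le> v\<bullet>i"
        using True by auto
      then show "v\<bullet>i - u\<bullet>i = \<bar>2 * (a\<bullet>i)\<bar>"
        using uv[of i] i by auto
    qed
    moreover have "v\<bullet>k - u\<bullet>k \<le> c2 - c1"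
      using uv[OF assms(1)] by simp
    ultimately have "(v\<bullet>k - u\<bullet>k) * (\<Prod>i\<in>Basis-{k}. v\<bullet>i - u\<bullet>i) \<le> (c2 - c1) * (\<Prod>i\<in>Basis-{k}. \<bar>2 * (a\<bullet>i)\<bar>)"
      by (simp add: mult_right_mono prod_nonneg)
    then show ?thesis
      using True assms(1) by (simp add: content_cbox prod.remove inner_diff_left mult.commute)
  qed
  ultimately show ?thesis
    by simp
qed

lemma lipschitz_measure_Int_halfspace:
  fixes S :: "'a::euclidean_space set"
  assumes "compact S" "k \<in> Basis"
  obtains L where "L-lipschitz_on UNIV (\<lambda>c. measure lebesgue (S \<inter> {x. x\<bullet>k \<le> c}))"
proof -
  define g where "g c = measure lebesgue (S \<inter> {x. x\<bullet>k \<le> c})" for c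
  obtain a where a: "S \<subseteq> cbox (-a) a"
    using bounded_subset_cbox_symmetric compact_imp_bounded assms(1) by metis
  define L where "L = (\<Prod>i\<in>Basis-{k}. \<bar>2 * (a\<bullet>i)\<bar>)"
  have "0 \<le> L"
    unfolding L_def by (simp add: prod_nonneg)
  have slab: "0 \<le> g c2 - g c1 \<and> g c2 - g c1 \<le> L * (c2 - c1)" if "c1 \<le> c2" for c1 c2
  proof -
    let ?S2 = "S \<inter> {x. x\<bullet>k \<le> c2}"
    have "compact ?S2"
      by (intro compact_Int_closed assms closed_halfspace_component_le)
    moreover have "?S2 \<inter> {x. x\<bullet>k \<le> c1} = S \<inter> {x. x\<bullet>k \<le> c1}"
      using that by auto
    ultimately have "g c2 - g c1 = measure lebesgue (?S2 \<inter> {x. x\<bullet>k \<ge> c1})"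
      using measure_Int_halfspaces_split[OF _ assms(2), of ?S2 c1] by (simp add: g_def)
    moreover have "measure lebesgue (?S2 \<inter> {x. x\<bullet>k \<ge> c1})
                     \<le> measure lebesgue (cbox (-a) a \<inter> {x. x\<bullet>k \<le> c2} \<inter> {x. x\<bullet>k \<ge> c1})"
      using a \<open>compact ?S2\<close> assms(1)
      by (intro measure_mono_fmeasurable fmeasurableD lmeasurable_compact compact_Int_closed
          closed_halfspace_component_le closed_halfspace_component_ge compact_cbox) auto
    ultimately show ?thesis
      using measure_cbox_slab_le[OF assms(2) that, of a] unfolding L_def by simp
  qed
  have "L-lipschitz_on UNIV g"
  proof (rule lipschitz_onI[OF _ \<open>0 \<le> L\<close>])
    fix x y :: real
    show "dist (g x) (g y) \<le> L * dist x y"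
      using slab[of x y] slab[of y x] by (cases "x \<le> y") (simp_all add: dist_real_def)
  qed
  then show ?thesis
    using that unfolding g_def by blast
qed

lemma measure_Int_halfspace_IVT:
  fixes S :: "'a::euclidean_space set"
  assumes "compact S" "k \<in> Basis" "0 \<le> y" "y \<le> measure lebesgue S"
  obtains c where "measure lebesgue (S \<inter> {x. x\<bullet>k \<le> c}) = y"
proof -
  define g where "g c = measure lebesgue (S \<inter> {x. x\<bullet>k \<le> c})" for c
  obtain a where a: "S \<subseteq> cbox (-a) a"
    using bounded_subset_cbox_symmetric compact_imp_bounded assms(1) by metis
  then have bound: "\<bar>x\<bullet>k\<bar> \<le> \<bar>a\<bullet>k\<bar>" if "x \<in> S" for x
    using that assms(2) by (force simp: mem_box)
  have "S \<inter> {x. x\<bullet>k \<le> - \<bar>a\<bullet>k\<bar> - 1} = {}"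
    using bound by force
  then have "g (- \<bar>a\<bullet>k\<bar> - 1) = 0"
    by (simp add: g_def)
  moreover have "S \<inter> {x. x\<bullet>k \<le> \<bar>a\<bullet>k\<bar>} = S"
    using bound by force
  then have "g \<bar>a\<bullet>k\<bar> = measure lebesgue S"
    by (simp add: g_def)
  moreover obtain L where "L-lipschitz_on UNIV g"
    using lipschitz_measure_Int_halfspace[OF assms(1,2)] unfolding g_def by blast
  then have "continuous_on {- \<bar>a\<bullet>k\<bar> - 1..\<bar>a\<bullet>k\<bar>} g"
    by (rule lipschitz_on_continuous_on[OF lipschitz_on_subset]) simp
  ultimately have "\<exists>c \<ge> - \<bar>a\<bullet>k\<bar> - 1. c \<le> \<bar>a\<bullet>k\<bar> \<and> g c = y"
    using assms(3,4) by (intro IVT') auto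
  then obtain c where "g c = y"
    by blast
  then show ?thesis
    using that unfolding g_def by blast
qed

section \<open>Brunn-Minkowski for non-overlapping boxes\<close>

lemma min_prod_le_prod_average:
  fixes x y :: "'b \<Rightarrow> real"
  assumes "\<And>i. i \<in> I \<Longrightarrow> 0 \<le> x i" "\<And>i. i \<in> I \<Longrightarrow> 0 \<le> y i"
  shows "min (prod x I) (prod y I) \<le> (\<Prod>i\<in>I. (x i + y i) / 2)"
proof -
  have "(min (prod x I) (prod y I))\<^sup>2 \<le> prod x I * prod y I"
    unfolding power2_eq_square using assms by (intro mult_mono) (auto intro: prod_nonneg)
  also have "\<dots> = (\<Prod>i\<in>I. x i * y i)"
    by (simp add: prod.distrib)
  also have "\<dots> \<le> (\<Prod>i\<in>I. ((x i + y i) / 2)\<^sup>2)"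
  proof (rule prod_mono)
    fix i assume "i \<in> I"
    moreover have "x i * y i \<le> ((x i + y i) / 2)\<^sup>2"
      using sum_power2_ge_zero[of "x i - y i" 0] by (simp add: power2_eq_square field_simps)
    ultimately show "0 \<le> x i * y i \<and> x i * y i \<le> ((x i + y i) / 2)\<^sup>2"
      using assms by simp
  qed
  also have "\<dots> = (\<Prod>i\<in>I. (x i + y i) / 2)\<^sup>2"
    by (simp add: prod_power_distrib)
  finally show ?thesis
    by (rule power2_le_imp_le) (use assms in \<open>auto intro!: prod_nonneg\<close>)
qed

lemma cbox_midpoints_subset:
  fixes a b a' b' :: "'a::euclidean_space"
  assumes "\<And>i. i \<in> Basis \<Longrightarrow> a\<bullet>i < b\<bullet>i" "\<And>i. i \<in> Basis \<Longrightarrow> a'\<bullet>i < b'\<bullet>i"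
  shows "cbox ((1/2::real) *\<^sub>R a + (1/2::real) *\<^sub>R a') ((1/2::real) *\<^sub>R b + (1/2::real) *\<^sub>R b')
           \<subseteq> midpoints (cbox a b) (cbox a' b')"
    (is "cbox ?lo ?hi \<subseteq> _")
proof
  fix z assume z: "z \<in> cbox ?lo ?hi"
  define t where "t i = (z\<bullet>i - ?lo\<bullet>i) / (?hi\<bullet>i - ?lo\<bullet>i)" for i
  have t: "0 \<le> t i" "t i \<le> 1" "z\<bullet>i = ?lo\<bullet>i + t i * (?hi\<bullet>i - ?lo\<bullet>i)" if i: "i \<in> Basis" for i
  proof -
    have "?lo\<bullet>i < ?hi\<bullet>i"
      using assms[OF i] by (simp add: inner_add_left)
    moreover have "?lo\<bullet>i \<le> z\<bullet>i" "z\<bullet>i \<le> ?hi\<bullet>i"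
      using z i by (simp_all add: mem_box)
    ultimately show "0 \<le> t i" "t i \<le> 1" "z\<bullet>i = ?lo\<bullet>i + t i * (?hi\<bullet>i - ?lo\<bullet>i)"
      by (simp_all add: t_def)
  qed
  define x :: 'a where "x = (\<Sum>i\<in>Basis. (a\<bullet>i + t i * (b\<bullet>i - a\<bullet>i)) *\<^sub>R i)"
  define y :: 'a where "y = (\<Sum>i\<in>Basis. (a'\<bullet>i + t i * (b'\<bullet>i - a'\<bullet>i)) *\<^sub>R i)"
  have xi: "x\<bullet>i = a\<bullet>i + t i * (b\<bullet>i - a\<bullet>i)" and yi: "y\<bullet>i = a'\<bullet>i + t i * (b'\<bullet>i - a'\<bullet>i)"
    if "i \<in> Basis" for i
    unfolding x_def y_def using that by (simp_all add: inner_sum_left_Basis)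
  have "a\<bullet>i \<le> x\<bullet>i \<and> x\<bullet>i \<le> b\<bullet>i" "a'\<bullet>i \<le> y\<bullet>i \<and> y\<bullet>i \<le> b'\<bullet>i" if i: "i \<in> Basis" for i
  proof -
    have "0 \<le> t i * (b\<bullet>i - a\<bullet>i)" "t i * (b\<bullet>i - a\<bullet>i) \<le> b\<bullet>i - a\<bullet>i"
      "0 \<le> t i * (b'\<bullet>i - a'\<bullet>i)" "t i * (b'\<bullet>i - a'\<bullet>i) \<le> b'\<bullet>i - a'\<bullet>i"
      using t[OF i] assms[OF i] by (simp_all add: mult_left_le_one_le)
    then show "a\<bullet>i \<le> x\<bullet>i \<and> x\<bullet>i \<le> b\<bullet>i" "a'\<bullet>i \<le> y\<bullet>i \<and> y\<bullet>i \<le> b'\<bullet>i"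
      by (simp_all add: xi[OF i] yi[OF i])
  qed
  then have "x \<in> cbox a b" "y \<in> cbox a' b'"
    by (simp_all add: mem_box)
  moreover have "z = (1/2::real) *\<^sub>R x + (1/2::real) *\<^sub>R y"
  proof (rule euclidean_eqI)
    fix i :: 'a assume i: "i \<in> Basis"
    have "z\<bullet>i = ?lo\<bullet>i + t i * (?hi\<bullet>i - ?lo\<bullet>i)"
      using t(3)[OF i] .
    also have "\<dots> = x\<bullet>i / 2 + y\<bullet>i / 2"
      unfolding xi[OF i] yi[OF i] by (simp add: inner_add_left field_simps)
    finally show "z\<bullet>i = ((1/2::real) *\<^sub>R x + (1/2::real) *\<^sub>R y)\<bullet>i"
      by (simp add: inner_add_left)
  qed
  ultimately show "z \<in> midpoints (cbox a b) (cbox a' b')"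
    by (simp add: midpointsI)
qed

lemma min_measure_le_measure_midpoints_cbox:
  fixes a b a' b' :: "'a::euclidean_space"
  shows "min (measure lebesgue (cbox a b)) (measure lebesgue (cbox a' b'))
           \<le> measure lebesgue (midpoints (cbox a b) (cbox a' b'))"
proof (cases "\<forall>i\<in>Basis. a\<bullet>i < b\<bullet>i \<and> a'\<bullet>i < b'\<bullet>i")
  case False
  then have "\<not> 0 < measure lborel (cbox a b) \<or> \<not> 0 < measure lborel (cbox a' b')"
    unfolding content_pos_lt_eq by blast
  then have "min (measure lebesgue (cbox a b)) (measure lebesgue (cbox a' b')) \<le> 0"
    by (auto simp: min_le_iff_disj)
  then show ?thesis
    using measure_nonneg order_trans by blast
next
  case True
  then have ab: "a\<bullet>i \<le> b\<bullet>i" and ab': "a'\<bullet>i \<le> b'\<bullet>i" if "i \<in> Basis" for i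
    using that by (auto simp: less_imp_le)
  define lo :: 'a where "lo = (1/2::real) *\<^sub>R a + (1/2::real) *\<^sub>R a'"
  define hi :: 'a where "hi = (1/2::real) *\<^sub>R b + (1/2::real) *\<^sub>R b'"
  have "measure lebesgue (cbox lo hi) \<le> measure lebesgue (midpoints (cbox a b) (cbox a' b'))"
    using cbox_midpoints_subset[of a b a' b'] True unfolding lo_def hi_def
    by (intro measure_mono_fmeasurable lmeasurable_compact compact_midpoints) auto
  moreover have "measure lebesgue (cbox lo hi) = (\<Prod>i\<in>Basis. ((b\<bullet>i - a\<bullet>i) + (b'\<bullet>i - a'\<bullet>i)) / 2)"
  proof -
    have lohi: "lo\<bullet>i = (a\<bullet>i + a'\<bullet>i) / 2" "hi\<bullet>i = (b\<bullet>i + b'\<bullet>i) / 2" for i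
      unfolding lo_def hi_def by (simp_all add: inner_add_left)
    have "\<forall>i\<in>Basis. lo\<bullet>i \<le> hi\<bullet>i"
      using ab ab' by (simp add: lohi add_mono)
    then have "measure lebesgue (cbox lo hi) = (\<Prod>i\<in>Basis. hi\<bullet>i - lo\<bullet>i)"
      by (simp add: content_cbox inner_diff_left)
    then show ?thesis
      by (simp add: lohi diff_divide_distrib algebra_simps)
  qed
  moreover have "measure lebesgue (cbox a b) = (\<Prod>i\<in>Basis. b\<bullet>i - a\<bullet>i)"
    "measure lebesgue (cbox a' b') = (\<Prod>i\<in>Basis. b'\<bullet>i - a'\<bullet>i)"
    using ab ab' by (simp_all add: content_cbox inner_diff_left)
  moreover have "min (\<Prod>i\<in>Basis. b\<bullet>i - a\<bullet>i) (\<Prod>i\<in>Basis. b'\<bullet>i - a'\<bullet>i)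
                   \<le> (\<Prod>i\<in>Basis. ((b\<bullet>i - a\<bullet>i) + (b'\<bullet>i - a'\<bullet>i)) / 2)"
    using ab ab' by (intro min_prod_le_prod_average) simp_all
  ultimately show ?thesis
    by linarith
qed

definition box_family :: "'a::euclidean_space set set \<Rightarrow> bool" where
  "box_family F \<longleftrightarrow> finite F \<and> (\<forall>X\<in>F. \<exists>a b. X = cbox a b) \<and>
     pairwise (\<lambda>X Y. interior X \<inter> interior Y = {}) F"

definition nondegenerate :: "'a::euclidean_space set set \<Rightarrow> 'a set set" where
  "nondegenerate F = {X\<in>F. 0 < measure lebesgue X}"

lemma box_family_finite: "box_family F \<Longrightarrow> finite F"
  unfolding box_family_def by blast

lemma box_family_cboxE:
  assumes "box_family F" "X \<in> F"
  obtains a b where "X = cbox a b"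
  using assms unfolding box_family_def by blast

lemma lmeasurable_box_family_Int:
  assumes "box_family F" "X \<in> F" "closed H"
  shows "X \<inter> H \<in> lmeasurable"
proof -
  obtain a b where "X = cbox a b"
    using assms(1,2) by (rule box_family_cboxE)
  then show ?thesis
    using assms(3) by (simp add: lmeasurable_compact compact_Int_closed)
qed

lemma compact_Union_box_family: "box_family F \<Longrightarrow> compact (\<Union>F)"
  unfolding box_family_def by (auto intro!: compact_Union)

lemma measure_Union_box_family:
  assumes "box_family F"
  shows "measure lebesgue (\<Union>F) = (\<Sum>X\<in>F. measure lebesgue X)"
proof (rule measure_negligible_finite_Union)
  show "finite F"
    using assms by (rule box_family_finite)
  show "X \<in> lmeasurable" if "X \<in> F" for X
    using lmeasurable_box_family_Int[OF assms that closed_UNIV] by simp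
  show "pairwise (\<lambda>X Y. negligible (X \<inter> Y)) F"
    unfolding pairwise_def
  proof (intro ballI impI)
    fix X Y assume XY: "X \<in> F" "Y \<in> F" "X \<noteq> Y"
    obtain a b c d where X: "X = cbox a b" and Y: "Y = cbox c d"
      using assms XY by (meson box_family_cboxE)
    have "interior X \<inter> interior Y = {}"
      using assms XY by (auto simp: box_family_def pairwise_def)
    then have "X \<inter> Y \<subseteq> (cbox a b - box a b) \<union> (cbox c d - box c d)"
      using X Y by auto
    then show "negligible (X \<inter> Y)"
      by (rule negligible_subset[rotated]) (simp add: negligible_frontier_interval)
  qed
qed

lemma measure_Union_box_family_le_one:
  assumes "box_family F" "card (nondegenerate F) \<le> 1" "F \<noteq> {}"
  obtains X where "X \<in> F" "measure lebesgue (\<Union>F) = measure lebesgue X"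
proof -
  have fin: "finite F"
    using assms(1) by (rule box_family_finite)
  have sum_eq: "measure lebesgue (\<Union>F) = (\<Sum>X\<in>nondegenerate F. measure lebesgue X)"
    unfolding measure_Union_box_family[OF assms(1)] nondegenerate_def
    by (rule sum.mono_neutral_right[OF fin]) (auto simp: order.strict_iff_order)
  have "finite (nondegenerate F)"
    using fin by (simp add: nondegenerate_def)
  then consider "nondegenerate F = {}" | X where "nondegenerate F = {X}"
    using assms(2) by (auto simp: le_Suc_eq card_1_singleton_iff)
  then show ?thesis
  proof cases
    case 1
    obtain X where "X \<in> F"
      using assms(3) by blast
    moreover from this 1 have "measure lebesgue X = 0"
      by (auto simp: nondegenerate_def order.strict_iff_order)
    ultimately show ?thesis
      using that sum_eq 1 by simp
  next
    case (2 X)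
    then have "X \<in> F"
      by (auto simp: nondegenerate_def)
    with 2 show ?thesis
      using that sum_eq by simp
  qed
qed

lemma box_family_Int_halfspace:
  assumes "box_family F" "k \<in> Basis"
  shows "box_family ((\<lambda>X. X \<inter> {x. x\<bullet>k \<le> c}) ` F)" "box_family ((\<lambda>X. X \<inter> {x. x\<bullet>k \<ge> c}) ` F)"
proof -
  have cut: "box_family ((\<lambda>X. X \<inter> H) ` F)" if "\<And>a b. \<exists>a' b'. cbox a b \<inter> H = cbox a' b'" for H
    unfolding box_family_def
  proof (intro conjI)
    show "finite ((\<lambda>X. X \<inter> H) ` F)"
      using assms(1) by (simp add: box_family_finite)
    show "\<forall>Z\<in>(\<lambda>X. X \<inter> H) ` F. \<exists>a b. Z = cbox a b"
      using that by (auto elim!: box_family_cboxE[OF assms(1)])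
    have "interior (X \<inter> H) \<inter> interior (Y \<inter> H) = {}" if "X \<in> F" "Y \<in> F" "X \<noteq> Y" for X Y
      using assms(1) that interior_mono[of "X \<inter> H" X] interior_mono[of "Y \<inter> H" Y]
      unfolding box_family_def pairwise_def by blast
    then show "pairwise (\<lambda>X Y. interior X \<inter> interior Y = {}) ((\<lambda>X. X \<inter> H) ` F)"
      unfolding pairwise_def by blast
  qed
  show "box_family ((\<lambda>X. X \<inter> {x. x\<bullet>k \<le> c}) ` F)"
    by (intro cut) (auto simp: interval_split(1)[OF assms(2)])
  show "box_family ((\<lambda>X. X \<inter> {x. x\<bullet>k \<ge> c}) ` F)"
    by (intro cut) (auto simp: interval_split(2)[OF assms(2)])
qed

lemma card_nondegenerate_image_Int:
  assumes "box_family F" "closed H"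
  shows "card (nondegenerate ((\<lambda>X. X \<inter> H) ` F))
           \<le> card {X \<in> nondegenerate F. 0 < measure lebesgue (X \<inter> H)}"
proof -
  have fin: "finite {X \<in> nondegenerate F. 0 < measure lebesgue (X \<inter> H)}"
    using assms(1) by (simp add: box_family_finite nondegenerate_def)
  have "nondegenerate ((\<lambda>X. X \<inter> H) ` F)
          \<subseteq> (\<lambda>X. X \<inter> H) ` {X \<in> nondegenerate F. 0 < measure lebesgue (X \<inter> H)}"
  proof
    fix Z assume "Z \<in> nondegenerate ((\<lambda>X. X \<inter> H) ` F)"
    then obtain X where X: "X \<in> F" "Z = X \<inter> H" "0 < measure lebesgue (X \<inter> H)"
      by (auto simp: nondegenerate_def)
    have "measure lebesgue (X \<inter> H) \<le> measure lebesgue X"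
      using lmeasurable_box_family_Int[OF assms(1) X(1)] assms(2)
        lmeasurable_box_family_Int[OF assms(1) X(1) closed_UNIV]
      by (intro measure_mono_fmeasurable fmeasurableD) auto
    then show "Z \<in> (\<lambda>X. X \<inter> H) ` {X \<in> nondegenerate F. 0 < measure lebesgue (X \<inter> H)}"
      using X by (auto simp: nondegenerate_def)
  qed
  then have "card (nondegenerate ((\<lambda>X. X \<inter> H) ` F))
               \<le> card ((\<lambda>X. X \<inter> H) ` {X \<in> nondegenerate F. 0 < measure lebesgue (X \<inter> H)})"
    using fin by (intro card_mono) auto
  also have "\<dots> \<le> card {X \<in> nondegenerate F. 0 < measure lebesgue (X \<inter> H)}"
    using fin by (rule card_image_le)
  finally show ?thesis .
qed

lemma card_nondegenerate_Int_le:
  assumes "box_family F" "closed H"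
  shows "card (nondegenerate ((\<lambda>X. X \<inter> H) ` F)) \<le> card (nondegenerate F)"
proof -
  have "finite (nondegenerate F)"
    using assms(1) by (simp add: box_family_finite nondegenerate_def)
  then have "card {X \<in> nondegenerate F. 0 < measure lebesgue (X \<inter> H)} \<le> card (nondegenerate F)"
    by (intro card_mono) auto
  with card_nondegenerate_image_Int[OF assms] show ?thesis
    by linarith
qed

lemma card_nondegenerate_Int_less:
  assumes "box_family F" "closed H" "Y \<in> nondegenerate F" "measure lebesgue (Y \<inter> H) = 0"
  shows "card (nondegenerate ((\<lambda>X. X \<inter> H) ` F)) < card (nondegenerate F)"
proof -
  have fin: "finite (nondegenerate F)"
    using assms(1) by (simp add: box_family_finite nondegenerate_def)
  have "{X \<in> nondegenerate F. 0 < measure lebesgue (X \<inter> H)} \<subseteq> nondegenerate F - {Y}"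
    using assms(4) by auto
  then have "card {X \<in> nondegenerate F. 0 < measure lebesgue (X \<inter> H)} \<le> card (nondegenerate F - {Y})"
    using fin by (intro card_mono) auto
  also have "\<dots> < card (nondegenerate F)"
    using fin assms(3) by (rule card_Diff1_less)
  finally show ?thesis
    using card_nondegenerate_image_Int[OF assms(1,2)] by linarith
qed

lemma nonoverlapping_cboxes_separated:
  fixes a b a' b' :: "'a::euclidean_space"
  assumes "interior (cbox a b) \<inter> interior (cbox a' b') = {}"
    and "0 < measure lebesgue (cbox a b)" "0 < measure lebesgue (cbox a' b')"
  obtains k c where "k \<in> Basis" "cbox a b \<subseteq> {x. x\<bullet>k \<le> c}" "cbox a' b' \<subseteq> {x. x\<bullet>k \<ge> c}"
    | k c where "k \<in> Basis" "cbox a' b' \<subseteq> {x. x\<bullet>k \<le> c}" "cbox a b \<subseteq> {x. x\<bullet>k \<ge> c}"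
proof -
  have "box a b \<inter> box a' b' = {}"
    using assms(1) by simp
  then obtain i where i: "i \<in> Basis" "b\<bullet>i \<le> a\<bullet>i \<or> b'\<bullet>i \<le> a'\<bullet>i \<or> b\<bullet>i \<le> a'\<bullet>i \<or> b'\<bullet>i \<le> a\<bullet>i"
    unfolding disjoint_interval by blast
  moreover have "0 < measure lborel (cbox a b)" "0 < measure lborel (cbox a' b')"
    using assms(2,3) by simp_all
  then have "a\<bullet>i < b\<bullet>i" "a'\<bullet>i < b'\<bullet>i"
    using i(1) unfolding content_pos_lt_eq by blast+
  ultimately have "b\<bullet>i \<le> a'\<bullet>i \<or> b'\<bullet>i \<le> a\<bullet>i"
    by linarith
  moreover have X: "a\<bullet>i \<le> x\<bullet>i \<and> x\<bullet>i \<le> b\<bullet>i" if "x \<in> cbox a b" for x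
    using that i(1) by (simp add: mem_box)
  moreover have Y: "a'\<bullet>i \<le> x\<bullet>i \<and> x\<bullet>i \<le> b'\<bullet>i" if "x \<in> cbox a' b'" for x
    using that i(1) by (simp add: mem_box)
  ultimately show ?thesis
  proof (elim disjE)
    assume "b\<bullet>i \<le> a'\<bullet>i"
    then show ?thesis
      by (intro that(1)[OF i(1)]) (auto dest!: X Y)
  next
    assume "b'\<bullet>i \<le> a\<bullet>i"
    then show ?thesis
      by (intro that(2)[OF i(1)]) (auto dest!: X Y)
  qed
qed

lemma card_nondegenerate_Int_halfspaces_less:
  assumes "box_family F" "k \<in> Basis" "L \<in> nondegenerate F" "R \<in> nondegenerate F"
    and "L \<subseteq> {x. x\<bullet>k \<le> c}" "R \<subseteq> {x. x\<bullet>k \<ge> c}"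
  shows "card (nondegenerate ((\<lambda>X. X \<inter> {x. x\<bullet>k \<le> c}) ` F)) < card (nondegenerate F)"
    and "card (nondegenerate ((\<lambda>X. X \<inter> {x. x\<bullet>k \<ge> c}) ` F)) < card (nondegenerate F)"
proof -
  have "negligible (R \<inter> {x. x\<bullet>k \<le> c})" "negligible (L \<inter> {x. x\<bullet>k \<ge> c})"
    by (rule negligible_subset[OF negligible_standard_hyperplane[OF assms(2), of c]];
        use assms(5,6) in auto)+
  then show "card (nondegenerate ((\<lambda>X. X \<inter> {x. x\<bullet>k \<le> c}) ` F)) < card (nondegenerate F)"
    "card (nondegenerate ((\<lambda>X. X \<inter> {x. x\<bullet>k \<ge> c}) ` F)) < card (nondegenerate F)"
    by (intro card_nondegenerate_Int_less[OF assms(1) closed_halfspace_component_le assms(4)]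
        card_nondegenerate_Int_less[OF assms(1) closed_halfspace_component_ge assms(3)]
        negligible_imp_measure0; simp)+
qed

lemma box_family_cut:
  assumes "box_family F" "2 \<le> card (nondegenerate F)"
  obtains k c where "k \<in> Basis"
    "card (nondegenerate ((\<lambda>X. X \<inter> {x. x\<bullet>k \<le> c}) ` F)) < card (nondegenerate F)"
    "card (nondegenerate ((\<lambda>X. X \<inter> {x. x\<bullet>k \<ge> c}) ` F)) < card (nondegenerate F)"
proof -
  have "finite (nondegenerate F)"
    using assms(1) by (simp add: box_family_finite nondegenerate_def)
  with assms(2) have "\<not> (\<forall>X\<in>nondegenerate F. \<forall>Y\<in>nondegenerate F. X = Y)"
    by (simp add: card_le_Suc0_iff_eq[symmetric])
  then obtain X Y where XY: "X \<in> nondegenerate F" "Y \<in> nondegenerate F" "X \<noteq> Y"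
    by blast
  then have "X \<in> F" "Y \<in> F" and pos: "0 < measure lebesgue X" "0 < measure lebesgue Y"
    by (simp_all add: nondegenerate_def)
  obtain a b where X: "X = cbox a b"
    by (rule box_family_cboxE[OF assms(1) \<open>X \<in> F\<close>])
  obtain a' b' where Y: "Y = cbox a' b'"
    by (rule box_family_cboxE[OF assms(1) \<open>Y \<in> F\<close>])
  have "interior (cbox a b) \<inter> interior (cbox a' b') = {}"
    using assms(1) \<open>X \<in> F\<close> \<open>Y \<in> F\<close> XY(3) unfolding X Y box_family_def pairwise_def by blast
  from nonoverlapping_cboxes_separated[OF this pos[unfolded X Y]] show ?thesis
  proof cases
    case (1 k c)
    then show ?thesis
      by (intro that card_nondegenerate_Int_halfspaces_less[OF assms(1) _ XY(1,2)]) (simp_all add: X Y)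
  next
    case (2 k c)
    then show ?thesis
      by (intro that card_nondegenerate_Int_halfspaces_less[OF assms(1) _ XY(2,1)]) (simp_all add: X Y)
  qed
qed

lemma min_le_min_add_min_proportional:
  fixes a1 a2 b :: real
  assumes "0 \<le> a1" "0 \<le> a2" "0 < a1 + a2"
  shows "min (a1 + a2) b \<le> min a1 (a1 * b / (a1 + a2)) + min a2 (a2 * b / (a1 + a2))"
proof -
  have "a1 * b / (a1 + a2) + a2 * b / (a1 + a2) = (a1 + a2) * b / (a1 + a2)"
    by (simp add: add_divide_distrib distrib_right)
  then have sum: "a1 * b / (a1 + a2) + a2 * b / (a1 + a2) = b"
    using assms(3) by simp
  consider "a1 + a2 \<le> b" | "b \<le> a1 + a2"
    by linarith
  then show ?thesis
  proof cases
    case 1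
    then have "a1 \<le> a1 * b / (a1 + a2)" "a2 \<le> a2 * b / (a1 + a2)"
      using assms by (simp_all add: le_divide_eq mult_left_mono)
    then show ?thesis
      using 1 by simp
  next
    case 2
    then have "a1 * b / (a1 + a2) \<le> a1" "a2 * b / (a1 + a2) \<le> a2"
      using assms by (simp_all add: divide_le_eq mult_left_mono)
    then show ?thesis
      using 2 sum by simp
  qed
qed

text \<open>The cut of \<open>B\<close> is placed so that it splits the volume of \<open>B\<close> in the same ratio as the
  given cut splits \<open>A\<close>; the midpoint sets of the two pairs of pieces then lie on opposite sides of
  the hyperplane halfway between the cuts.\<close>

lemma min_measure_le_measure_midpoints_of_cuts:
  fixes A B :: "'a::euclidean_space set"
  assumes "compact A" "compact B" "k \<in> Basis"
    and le: "\<And>c'. min (measure lebesgue (A \<inter> {x. x\<bullet>k \<le> c})) (measure lebesgue (B \<inter> {x. x\<bullet>k \<le> c'}))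
               \<le> measure lebesgue (midpoints (A \<inter> {x. x\<bullet>k \<le> c}) (B \<inter> {x. x\<bullet>k \<le> c'}))"
    and ge: "\<And>c'. min (measure lebesgue (A \<inter> {x. x\<bullet>k \<ge> c})) (measure lebesgue (B \<inter> {x. x\<bullet>k \<ge> c'}))
               \<le> measure lebesgue (midpoints (A \<inter> {x. x\<bullet>k \<ge> c}) (B \<inter> {x. x\<bullet>k \<ge> c'}))"
  shows "min (measure lebesgue A) (measure lebesgue B) \<le> measure lebesgue (midpoints A B)"
proof -
  define a1 where "a1 = measure lebesgue (A \<inter> {x. x\<bullet>k \<le> c})"
  define a2 where "a2 = measure lebesgue (A \<inter> {x. x\<bullet>k \<ge> c})"
  define b where "b = measure lebesgue B"
  have a: "measure lebesgue A = a1 + a2"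
    unfolding a1_def a2_def using assms(1,3) by (rule measure_Int_halfspaces_split)
  have nonneg: "0 \<le> a1" "0 \<le> a2" "0 \<le> b"
    by (simp_all add: a1_def a2_def b_def)
  show ?thesis
  proof (cases "a1 + a2 = 0")
    case True
    then show ?thesis
      using a by (simp add: min_def)
  next
    case False
    then have "0 < a1 + a2"
      using nonneg by simp
    have "a1 * b \<le> (a1 + a2) * b"
      using nonneg by (intro mult_right_mono) auto
    then have "0 \<le> a1 * b / (a1 + a2)" "a1 * b / (a1 + a2) \<le> b"
      using \<open>0 < a1 + a2\<close> nonneg by (simp_all add: divide_le_eq mult.commute)
    then obtain c' where c': "measure lebesgue (B \<inter> {x. x\<bullet>k \<le> c'}) = a1 * b / (a1 + a2)"
      using measure_Int_halfspace_IVT[OF assms(2,3)] unfolding b_def by blast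
    have "measure lebesgue (B \<inter> {x. x\<bullet>k \<ge> c'}) = b - a1 * b / (a1 + a2)"
      using measure_Int_halfspaces_split[OF assms(2,3), of c'] c' unfolding b_def by simp
    also have "\<dots> = a2 * b / (a1 + a2)"
      using \<open>0 < a1 + a2\<close> by (simp add: field_simps)
    finally have c'': "measure lebesgue (B \<inter> {x. x\<bullet>k \<ge> c'}) = a2 * b / (a1 + a2)" .
    have "min (a1 + a2) b \<le> min a1 (a1 * b / (a1 + a2)) + min a2 (a2 * b / (a1 + a2))"
      using nonneg(1,2) \<open>0 < a1 + a2\<close> by (rule min_le_min_add_min_proportional)
    also have "\<dots> \<le> measure lebesgue (midpoints A B)"
      using le[of c'] ge[of c'] measure_midpoints_Int_halfspaces[OF assms(1-3), of c c']
      unfolding a1_def[symmetric] a2_def[symmetric] c' c'' by linarith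
    finally show ?thesis
      by (simp add: a b_def)
  qed
qed

lemma min_measure_le_measure_midpoints_box_family_cut:
  fixes A B :: "'a::euclidean_space set set"
  assumes IH: "\<And>F G :: 'a set set.
      card (nondegenerate F) + card (nondegenerate G) < card (nondegenerate A) + card (nondegenerate B) \<Longrightarrow>
      box_family F \<Longrightarrow> box_family G \<Longrightarrow>
      min (measure lebesgue (\<Union>F)) (measure lebesgue (\<Union>G)) \<le> measure lebesgue (midpoints (\<Union>F) (\<Union>G))"
    and A: "box_family A" "2 \<le> card (nondegenerate A)" and B: "box_family B"
  shows "min (measure lebesgue (\<Union>A)) (measure lebesgue (\<Union>B)) \<le> measure lebesgue (midpoints (\<Union>A) (\<Union>B))"
proof -
  obtain k c where k: "k \<in> Basis"
    and less: "card (nondegenerate ((\<lambda>X. X \<inter> {x. x\<bullet>k \<le> c}) ` A)) < card (nondegenerate A)"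
      "card (nondegenerate ((\<lambda>X. X \<inter> {x. x\<bullet>k \<ge> c}) ` A)) < card (nondegenerate A)"
    using box_family_cut[OF A] by blast
  have UN_Int: "\<Union>((\<lambda>X. X \<inter> H) ` F) = \<Union>F \<inter> H" for H and F :: "'a set set"
    by auto
  show ?thesis
  proof (rule min_measure_le_measure_midpoints_of_cuts[OF compact_Union_box_family[OF A(1)]
        compact_Union_box_family[OF B] k])
    show "min (measure lebesgue (\<Union>A \<inter> {x. x\<bullet>k \<le> c})) (measure lebesgue (\<Union>B \<inter> {x. x\<bullet>k \<le> c'}))
            \<le> measure lebesgue (midpoints (\<Union>A \<inter> {x. x\<bullet>k \<le> c}) (\<Union>B \<inter> {x. x\<bullet>k \<le> c'}))" for c'
      using IH[of "(\<lambda>X. X \<inter> {x. x\<bullet>k \<le> c}) ` A" "(\<lambda>X. X \<inter> {x. x\<bullet>k \<le> c'}) ` B"]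
        less(1) card_nondegenerate_Int_le[OF B closed_halfspace_component_le[of k c']]
        box_family_Int_halfspace[OF A(1) k] box_family_Int_halfspace[OF B k]
      by (simp add: UN_Int)
    show "min (measure lebesgue (\<Union>A \<inter> {x. x\<bullet>k \<ge> c})) (measure lebesgue (\<Union>B \<inter> {x. x\<bullet>k \<ge> c'}))
            \<le> measure lebesgue (midpoints (\<Union>A \<inter> {x. x\<bullet>k \<ge> c}) (\<Union>B \<inter> {x. x\<bullet>k \<ge> c'}))" for c'
      using IH[of "(\<lambda>X. X \<inter> {x. x\<bullet>k \<ge> c}) ` A" "(\<lambda>X. X \<inter> {x. x\<bullet>k \<ge> c'}) ` B"]
        less(2) card_nondegenerate_Int_le[OF B closed_halfspace_component_ge[of c' k]]
        box_family_Int_halfspace[OF A(1) k] box_family_Int_halfspace[OF B k]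
      by (simp add: UN_Int)
  qed
qed

lemma min_measure_le_measure_midpoints_box_family_le_one:
  fixes F G :: "'a::euclidean_space set set"
  assumes "box_family F" "box_family G" "card (nondegenerate F) \<le> 1" "card (nondegenerate G) \<le> 1"
  shows "min (measure lebesgue (\<Union>F)) (measure lebesgue (\<Union>G)) \<le> measure lebesgue (midpoints (\<Union>F) (\<Union>G))"
proof (cases "F = {} \<or> G = {}")
  case True
  then have "min (measure lebesgue (\<Union>F)) (measure lebesgue (\<Union>G)) \<le> 0"
    by (metis Union_empty measure_empty min.cobounded1 min.cobounded2)
  then show ?thesis
    using measure_nonneg[of lebesgue "midpoints (\<Union>F) (\<Union>G)"] by linarith
next
  case False
  then have "F \<noteq> {}" "G \<noteq> {}"
    by simp_all
  obtain X where XF: "X \<in> F" "measure lebesgue (\<Union>F) = measure lebesgue X"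
    by (rule measure_Union_box_family_le_one[OF assms(1,3) \<open>F \<noteq> {}\<close>])
  obtain Y where YG: "Y \<in> G" "measure lebesgue (\<Union>G) = measure lebesgue Y"
    by (rule measure_Union_box_family_le_one[OF assms(2,4) \<open>G \<noteq> {}\<close>])
  obtain a b where X: "X = cbox a b"
    by (rule box_family_cboxE[OF assms(1) XF(1)])
  obtain a' b' where Y: "Y = cbox a' b'"
    by (rule box_family_cboxE[OF assms(2) YG(1)])
  have "min (measure lebesgue (\<Union>F)) (measure lebesgue (\<Union>G)) \<le> measure lebesgue (midpoints X Y)"
    unfolding XF(2) YG(2) X Y by (rule min_measure_le_measure_midpoints_cbox)
  also have "\<dots> \<le> measure lebesgue (midpoints (\<Union>F) (\<Union>G))"
  proof (rule measure_mono_fmeasurable)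
    show "midpoints X Y \<subseteq> midpoints (\<Union>F) (\<Union>G)"
      using XF(1) YG(1) by (intro midpoints_mono) auto
    show "midpoints X Y \<in> sets lebesgue"
      unfolding X Y by (intro fmeasurableD lmeasurable_compact compact_midpoints compact_cbox)
    show "midpoints (\<Union>F) (\<Union>G) \<in> lmeasurable"
      using assms(1,2) by (intro lmeasurable_compact compact_midpoints compact_Union_box_family)
  qed
  finally show ?thesis .
qed

lemma min_measure_le_measure_midpoints_box_family:
  fixes F G :: "'a::euclidean_space set set"
  assumes "box_family F" "box_family G"
  shows "min (measure lebesgue (\<Union>F)) (measure lebesgue (\<Union>G)) \<le> measure lebesgue (midpoints (\<Union>F) (\<Union>G))"
  using assms
proof (induction "card (nondegenerate F) + card (nondegenerate G)" arbitrary: F G rule: less_induct)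
  case (less F G)
  consider "2 \<le> card (nondegenerate F)" | "2 \<le> card (nondegenerate G)"
    | "card (nondegenerate F) \<le> 1" "card (nondegenerate G) \<le> 1"
    by linarith
  then show ?case
  proof cases
    case 1
    show ?thesis
    proof (rule min_measure_le_measure_midpoints_box_family_cut[OF _ less.prems(1) 1 less.prems(2)])
      fix F' G' :: "'a set set"
      assume "card (nondegenerate F') + card (nondegenerate G') < card (nondegenerate F) + card (nondegenerate G)"
      then show "box_family F' \<Longrightarrow> box_family G' \<Longrightarrow>
          min (measure lebesgue (\<Union>F')) (measure lebesgue (\<Union>G')) \<le> measure lebesgue (midpoints (\<Union>F') (\<Union>G'))"
        by (rule less.hyps)
    qed
  next
    case 2
    have "min (measure lebesgue (\<Union>G)) (measure lebesgue (\<Union>F)) \<le> measure lebesgue (midpoints (\<Union>G) (\<Union>F))"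
    proof (rule min_measure_le_measure_midpoints_box_family_cut[OF _ less.prems(2) 2 less.prems(1)])
      fix F' G' :: "'a set set"
      assume "card (nondegenerate F') + card (nondegenerate G') < card (nondegenerate G) + card (nondegenerate F)"
      then show "box_family F' \<Longrightarrow> box_family G' \<Longrightarrow>
          min (measure lebesgue (\<Union>F')) (measure lebesgue (\<Union>G')) \<le> measure lebesgue (midpoints (\<Union>F') (\<Union>G'))"
        by (intro less.hyps) (simp_all add: add.commute)
    qed
    then show ?thesis
      by (simp add: min.commute midpoints_commute)
  next
    case 3
    with less.prems show ?thesis
      by (rule min_measure_le_measure_midpoints_box_family_le_one)
  qed
qed

lemma box_family_inner_approximation:
  fixes U :: "'a::euclidean_space set"
  assumes "open U" "bounded U" "0 < e"
  obtains F where "box_family F" "\<Union>F \<subseteq> U" "measure lebesgue U - e < measure lebesgue (\<Union>F)"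
proof -
  obtain \<D> where \<D>: "countable \<D>" "\<D> \<subseteq> Pow U" "\<And>X. X \<in> \<D> \<Longrightarrow> \<exists>a b. X = cbox a b" "\<Union>\<D> = U"
    using open_countable_Union_open_cbox[OF assms(1)] by metis
  have cbox_D: "\<exists>a b. X = cbox a b" if "X \<in> \<D>'" "\<D>' \<subseteq> \<D>" for X \<D>'
    using \<D>(3) that by blast
  have compact_UN: "compact (\<Union>\<D>')" if "\<D>' \<subseteq> \<D>" "finite \<D>'" for \<D>'
  proof (rule compact_Union[OF that(2)])
    show "compact X" if "X \<in> \<D>'" for X
      using cbox_D[OF that \<open>\<D>' \<subseteq> \<D>\<close>] by auto
  qed
  have "U \<in> lmeasurable"
    using assms(2,1) by (rule lmeasurable_open)
  obtain \<D>' where \<D>': "\<D>' \<subseteq> \<D>" "finite \<D>'" "measure lebesgue (\<Union>\<D>) - e < measure lebesgue (\<Union>\<D>')"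
  proof (rule measure_countable_Union_approachable[OF \<D>(1) assms(3)])
    show "X \<in> lmeasurable" if "X \<in> \<D>" for X
      using \<D>(3)[OF that] by auto
    show "measure lebesgue (\<Union>\<D>') \<le> measure lebesgue U" if "\<D>' \<subseteq> \<D>" "finite \<D>'" for \<D>'
      using \<D>(2) that
      by (intro measure_mono_fmeasurable[OF _ _ \<open>U \<in> lmeasurable\<close>] fmeasurableD lmeasurable_compact
          compact_UN) auto
  qed blast
  obtain p where p: "p division_of (\<Union>\<D>')"
    using elementary_unions_intervals[OF \<D>'(2) cbox_D[OF _ \<D>'(1)]] by blast
  have "box_family p"
    unfolding box_family_def pairwise_def using division_ofD(1,4,5)[OF p] by blast
  moreover have "\<Union>p \<subseteq> U"
    using division_ofD(6)[OF p] \<D>'(1) \<D>(2) by blast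
  moreover have "measure lebesgue U - e < measure lebesgue (\<Union>p)"
    using division_ofD(6)[OF p] \<D>'(3) \<D>(4) by simp
  ultimately show ?thesis
    using that by blast
qed

theorem min_measure_le_measure_midpoints:
  fixes U V :: "'a::euclidean_space set"
  assumes "open U" "bounded U" "open V" "bounded V"
  shows "min (measure lebesgue U) (measure lebesgue V) \<le> measure lebesgue (midpoints U V)"
proof (rule field_le_epsilon)
  fix e :: real assume "0 < e"
  obtain F where F: "box_family F" "\<Union>F \<subseteq> U" "measure lebesgue U - e < measure lebesgue (\<Union>F)"
    using box_family_inner_approximation[OF assms(1,2) \<open>0 < e\<close>] by blast
  obtain G where G: "box_family G" "\<Union>G \<subseteq> V" "measure lebesgue V - e < measure lebesgue (\<Union>G)"
    using box_family_inner_approximation[OF assms(3,4) \<open>0 < e\<close>] by blast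
  have "min (measure lebesgue U) (measure lebesgue V) \<le> min (measure lebesgue (\<Union>F)) (measure lebesgue (\<Union>G)) + e"
    using F(3) G(3) by (simp add: min_def)
  also have "min (measure lebesgue (\<Union>F)) (measure lebesgue (\<Union>G)) \<le> measure lebesgue (midpoints (\<Union>F) (\<Union>G))"
    using F(1) G(1) by (rule min_measure_le_measure_midpoints_box_family)
  also have "\<dots> \<le> measure lebesgue (midpoints U V)"
  proof (rule measure_mono_fmeasurable)
    show "midpoints (\<Union>F) (\<Union>G) \<subseteq> midpoints U V"
      using F(2) G(2) by (rule midpoints_mono)
    show "midpoints (\<Union>F) (\<Union>G) \<in> sets lebesgue"
      using F(1) G(1) by (intro fmeasurableD lmeasurable_compact compact_midpoints compact_Union_box_family)
    show "midpoints U V \<in> lmeasurable"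
      using assms by (intro lmeasurable_open open_midpoints bounded_midpoints)
  qed
  finally show "min (measure lebesgue U) (measure lebesgue V) \<le> measure lebesgue (midpoints U V) + e"
    by simp
qed

lemma gauge_norm_set_nonempty:
  fixes L :: "'a::euclidean_space set"
  assumes "0 \<in> interior L"
  shows "{\<mu>. \<mu> > 0 \<and> x \<in> (\<lambda>y. \<mu> *\<^sub>R y) ` L} \<noteq> {}"
proof -
  obtain r where r: "r > 0" "cball 0 r \<subseteq> L"
    using assms mem_interior_cball by blast
  define \<mu> where "\<mu> = (norm x + 1) / r"
  have "0 < \<mu>"
    unfolding \<mu>_def using r(1) by (simp add: add_nonneg_pos)
  have "norm ((1 / \<mu>) *\<^sub>R x) = r * (norm x / (norm x + 1))"
    unfolding \<mu>_def using r(1) by (simp add: field_simps)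
  also have "\<dots> \<le> r"
    using r(1) by (intro mult_left_le) (auto simp: divide_le_eq_1 add_nonneg_pos)
  finally have "(1 / \<mu>) *\<^sub>R x \<in> L"
    using r(2) by auto
  moreover have "x = \<mu> *\<^sub>R ((1 / \<mu>) *\<^sub>R x)"
    using \<open>0 < \<mu>\<close> by simp
  ultimately show ?thesis
    using \<open>0 < \<mu>\<close> by blast
qed

lemma gauge_norm_less_imp_mem:
  fixes L :: "'a::euclidean_space set"
  assumes "convex L" "0 \<in> interior L" "gauge_norm L x < \<mu>"
  shows "x \<in> (\<lambda>y. \<mu> *\<^sub>R y) ` L"
proof -
  obtain \<mu>' y where "0 < \<mu>'" "\<mu>' < \<mu>" "y \<in> L" "x = \<mu>' *\<^sub>R y"
    using cInf_lessD[OF gauge_norm_set_nonempty[OF assms(2)], where z = \<mu>] assms(3)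
    unfolding gauge_norm_def by blast
  moreover have "0 \<in> L"
    using assms(2) interior_subset by blast
  ultimately have "(\<mu>' / \<mu>) *\<^sub>R y + (1 - \<mu>' / \<mu>) *\<^sub>R 0 \<in> L"
    by (intro convexD[OF assms(1)]) auto
  then have "(\<mu>' / \<mu>) *\<^sub>R y \<in> L"
    by simp
  moreover have "x = \<mu> *\<^sub>R ((\<mu>' / \<mu>) *\<^sub>R y)"
    using \<open>x = \<mu>' *\<^sub>R y\<close> \<open>0 < \<mu>'\<close> \<open>\<mu>' < \<mu>\<close> by simp
  ultimately show ?thesis
    by (rule rev_image_eqI)
qed

lemma gauge_norm_pos:
  fixes L :: "'a::euclidean_space set"
  assumes "bounded L" "0 \<in> interior L" "x \<noteq> 0"
  shows "0 < gauge_norm L x"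
proof -
  obtain R where R: "R > 0" "\<And>y. y \<in> L \<Longrightarrow> norm y \<le> R"
    using assms(1) bounded_pos by metis
  have "norm x / R \<le> gauge_norm L x"
    unfolding gauge_norm_def
  proof (rule cInf_greatest[OF gauge_norm_set_nonempty[OF assms(2)]])
    fix \<mu> assume "\<mu> \<in> {\<mu>. \<mu> > 0 \<and> x \<in> (\<lambda>y. \<mu> *\<^sub>R y) ` L}"
    then obtain y where y: "\<mu> > 0" "y \<in> L" "x = \<mu> *\<^sub>R y"
      by blast
    then have "norm x \<le> \<mu> * R"
      using R(2)[OF y(2)] by (simp add: mult_left_mono)
    then show "norm x / R \<le> \<mu>"
      using R(1) by (simp add: divide_le_eq)
  qed
  moreover have "0 < norm x / R"
    using assms(3) R(1) by simp
  ultimately show ?thesis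
    by linarith
qed

lemma gauge_norm_scaleR_interior_less:
  fixes L :: "'a::euclidean_space set"
  assumes "0 < \<mu>" "y \<in> interior L"
  shows "gauge_norm L (\<mu> *\<^sub>R y) < \<mu>"
proof -
  obtain e where e: "e > 0" "cball y e \<subseteq> L"
    using assms(2) mem_interior_cball by blast
  define s where "s = e / (norm y + 1)"
  have "0 < s"
    unfolding s_def using e(1) by (simp add: add_nonneg_pos)
  have "dist y ((1 + s) *\<^sub>R y) = e * (norm y / (norm y + 1))"
    using e(1) by (simp add: s_def dist_norm algebra_simps)
  also have "\<dots> \<le> e"
    using e(1) by (intro mult_left_le) (auto simp: divide_le_eq_1 add_nonneg_pos)
  finally have "(1 + s) *\<^sub>R y \<in> L"
    using e(2) by auto
  moreover have "\<mu> *\<^sub>R y = (\<mu> / (1 + s)) *\<^sub>R ((1 + s) *\<^sub>R y)"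
    using \<open>0 < s\<close> by simp
  ultimately have "\<mu> *\<^sub>R y \<in> (\<lambda>y. (\<mu> / (1 + s)) *\<^sub>R y) ` L"
    by (rule rev_image_eqI)
  then have "\<mu> / (1 + s) \<in> {\<mu>'. \<mu>' > 0 \<and> \<mu> *\<^sub>R y \<in> (\<lambda>y. \<mu>' *\<^sub>R y) ` L}"
    using assms(1) \<open>0 < s\<close> by simp
  then have "gauge_norm L (\<mu> *\<^sub>R y) \<le> \<mu> / (1 + s)"
    unfolding gauge_norm_def by (rule cInf_lower) (rule bdd_belowI[where m = 0], simp)
  also have "\<dots> < \<mu>"
    using \<open>0 < s\<close> assms(1) by (simp add: divide_less_eq)
  finally show ?thesis .
qed

section \<open>Packing translates\<close>

lemma le_power_mult_of_forall_pos:
  fixes a b c :: real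
  assumes "\<And>\<eta>. 0 < \<eta> \<Longrightarrow> a \<le> (b + \<eta>)^n * c"
  shows "a \<le> b^n * c"
proof -
  have "(\<lambda>k. (b + inverse (real (Suc k)))^n * c) \<longlonglongrightarrow> (b + 0)^n * c"
    by (intro tendsto_intros LIMSEQ_inverse_real_of_nat)
  then have lim: "(\<lambda>k. (b + inverse (real (Suc k)))^n * c) \<longlonglongrightarrow> b^n * c" by simp
  show ?thesis
  proof (rule LIMSEQ_le_const[OF lim])
    show "\<exists>N. \<forall>k\<ge>N. a \<le> (b + inverse (real (Suc k))) ^ n * c"
      using assms by (intro exI[of _ 0] allI impI) simp
  qed
qed

lemma measure_pos_of_interior_nonempty:
  fixes S :: "'a::euclidean_space set"
  assumes "S \<in> lmeasurable" "interior S \<noteq> {}"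
  shows "0 < measure lebesgue S"
proof -
  obtain x where "x \<in> interior S"
    using assms(2) by blast
  then obtain r where "0 < r" "ball x r \<subseteq> S"
    by (auto simp: mem_interior)
  then have "0 < measure lebesgue (ball x r)"
    using content_ball_pos by simp
  also have "\<dots> \<le> measure lebesgue S"
    using \<open>ball x r \<subseteq> S\<close> assms(1) by (intro measure_mono_fmeasurable) auto
  finally show ?thesis .
qed

lemma neg_mem_interior_if_symmetric:
  fixes C :: "'a::euclidean_space set"
  assumes "\<And>x. x \<in> C \<Longrightarrow> - x \<in> C" "x \<in> interior C"
  shows "- x \<in> interior C"
proof -
  have "uminus ` C = C"
  proof
    show "uminus ` C \<subseteq> C"
      using assms(1) by blast
    show "C \<subseteq> uminus ` C"
    proof
      fix y assume "y \<in> C"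
      then show "y \<in> uminus ` C"
        using image_eqI[of y uminus "- y"] assms(1) by simp
    qed
  qed
  moreover have "- x \<in> uminus ` interior C"
    using assms(2) by blast
  ultimately show ?thesis
    using interior_negations[of C] by simp
qed

lemma translates_interior_disjoint:
  fixes C :: "'a::euclidean_space set"
  assumes "convex C" "\<And>x. x \<in> C \<Longrightarrow> - x \<in> C" "0 < t" "2 * t \<le> gauge_norm C (p - q)"
  shows "(\<lambda>x. p + t *\<^sub>R x) ` interior C \<inter> (\<lambda>x. q + t *\<^sub>R x) ` interior C = {}"
proof (rule ccontr)
  assume "(\<lambda>x. p + t *\<^sub>R x) ` interior C \<inter> (\<lambda>x. q + t *\<^sub>R x) ` interior C \<noteq> {}"
  then obtain c1 c2 where c: "c1 \<in> interior C" "c2 \<in> interior C" "p + t *\<^sub>R c1 = q + t *\<^sub>R c2"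
    by auto
  define w where "w = (1/2::real) *\<^sub>R c2 + (1/2::real) *\<^sub>R (- c1)"
  have "w \<in> interior C"
    unfolding w_def using c(1,2) assms(2)
    by (intro convexD[OF convex_interior[OF assms(1)]] neg_mem_interior_if_symmetric) auto
  moreover have "p - q = (2 * t) *\<^sub>R w"
    using c(3) unfolding w_def by (simp add: algebra_simps)
  ultimately have "gauge_norm C (p - q) < 2 * t"
    using assms(3) by (simp add: gauge_norm_scaleR_interior_less)
  then show False
    using assms(4) by simp
qed

lemma convex_scaleR_add_mem:
  fixes D :: "'a::real_vector set"
  assumes "convex D" "d \<in> D" "w \<in> D" "0 \<le> \<alpha>" "0 \<le> \<beta>" "0 < \<alpha> + \<beta>"
  shows "\<alpha> *\<^sub>R d + \<beta> *\<^sub>R w \<in> (\<lambda>x. (\<alpha> + \<beta>) *\<^sub>R x) ` D"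
proof (rule image_eqI)
  show "(\<alpha> / (\<alpha> + \<beta>)) *\<^sub>R d + (\<beta> / (\<alpha> + \<beta>)) *\<^sub>R w \<in> D"
    using assms by (intro convexD) (simp_all flip: add_divide_distrib)
  show "\<alpha> *\<^sub>R d + \<beta> *\<^sub>R w = (\<alpha> + \<beta>) *\<^sub>R ((\<alpha> / (\<alpha> + \<beta>)) *\<^sub>R d + (\<beta> / (\<alpha> + \<beta>)) *\<^sub>R w)"
    using assms(6) by (simp add: scaleR_add_right)
qed

lemma midpoints_translates_subset:
  fixes C D :: "'a::euclidean_space set"
  assumes C: "convex C" "\<And>x. x \<in> C \<Longrightarrow> - x \<in> C"
    and D: "convex D" "C \<subseteq> D" "0 \<in> interior D"
    and "0 < t" "0 < \<Delta>"
    and diam: "\<And>p q. p \<in> S \<Longrightarrow> q \<in> S \<Longrightarrow> p \<noteq> q \<Longrightarrow> gauge_norm D (p - q) < \<Delta>"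
  shows "midpoints (\<Union>p\<in>S. (\<lambda>x. p + t *\<^sub>R x) ` C) (uminus ` (\<Union>p\<in>S. (\<lambda>x. p + t *\<^sub>R x) ` C))
           \<subseteq> (\<lambda>x. (\<Delta> / 2 + t) *\<^sub>R x) ` D"
proof
  fix z
  assume "z \<in> midpoints (\<Union>p\<in>S. (\<lambda>x. p + t *\<^sub>R x) ` C) (uminus ` (\<Union>p\<in>S. (\<lambda>x. p + t *\<^sub>R x) ` C))"
  then obtain y1 y2 where y: "y1 \<in> (\<Union>p\<in>S. (\<lambda>x. p + t *\<^sub>R x) ` C)"
    "y2 \<in> uminus ` (\<Union>p\<in>S. (\<lambda>x. p + t *\<^sub>R x) ` C)" "z = (1/2::real) *\<^sub>R y1 + (1/2::real) *\<^sub>R y2"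
    by (rule midpointsE)
  obtain p c1 where "p \<in> S" "c1 \<in> C" "y1 = p + t *\<^sub>R c1"
    using y(1) by blast
  moreover obtain q c2 where "q \<in> S" "c2 \<in> C" "y2 = - (q + t *\<^sub>R c2)"
    using y(2) by blast
  ultimately have pq: "p \<in> S" "q \<in> S" and "c1 \<in> C" "c2 \<in> C"
    and z: "z = (1/2::real) *\<^sub>R (p + t *\<^sub>R c1) + (1/2::real) *\<^sub>R (- (q + t *\<^sub>R c2))"
    using y(3) by simp_all
  obtain d where d: "d \<in> D" "p - q = \<Delta> *\<^sub>R d"
  proof (cases "p = q")
    case True
    then show ?thesis
      using that[of 0] D(3) interior_subset by auto
  next
    case False
    from gauge_norm_less_imp_mem[OF D(1,3) diam[OF pq False]]
    obtain d where "d \<in> D" "p - q = \<Delta> *\<^sub>R d"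
      by blast
    then show ?thesis
      by (rule that)
  qed
  define w where "w = (1/2::real) *\<^sub>R c1 + (1/2::real) *\<^sub>R (- c2)"
  have "w \<in> C"
    unfolding w_def using \<open>c1 \<in> C\<close> \<open>c2 \<in> C\<close> C(2) by (intro convexD[OF C(1)]) auto
  then have "w \<in> D"
    using D(2) by blast
  have "z = (1/2::real) *\<^sub>R (p - q) + t *\<^sub>R w"
    unfolding z w_def by (simp add: algebra_simps)
  also have "\<dots> = (\<Delta> / 2) *\<^sub>R d + t *\<^sub>R w"
    using d(2) by simp
  finally show "z \<in> (\<lambda>x. (\<Delta> / 2 + t) *\<^sub>R x) ` D"
    using convex_scaleR_add_mem[OF D(1) d(1) \<open>w \<in> D\<close>] \<open>0 < t\<close> \<open>0 < \<Delta>\<close> by simp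
qed

lemma measure_Union_translates_interior:
  fixes C :: "'a::euclidean_space set"
  assumes "convex C" "compact C" "\<And>x. x \<in> C \<Longrightarrow> - x \<in> C" "finite S" "0 < t"
    and "\<And>p q. p \<in> S \<Longrightarrow> q \<in> S \<Longrightarrow> p \<noteq> q \<Longrightarrow> 2 * t \<le> gauge_norm C (p - q)"
  shows "measure lebesgue (\<Union>p\<in>S. (\<lambda>x. p + t *\<^sub>R x) ` interior C)
           = real (card S) * (t ^ DIM('a) * measure lebesgue C)"
proof -
  have "(\<lambda>x. p + t *\<^sub>R x) ` interior C \<in> lmeasurable" for p
  proof (rule lmeasurable_open)
    show "open ((\<lambda>x. p + t *\<^sub>R x) ` interior C)"
      using assms(5) by (intro open_affinity open_interior) auto
    have "compact ((\<lambda>x. p + t *\<^sub>R x) ` C)"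
      using assms(2) by (intro compact_continuous_image continuous_intros)
    then show "bounded ((\<lambda>x. p + t *\<^sub>R x) ` interior C)"
      by (rule bounded_subset[OF compact_imp_bounded]) (use interior_subset in blast)
  qed
  moreover have "measure lebesgue ((\<lambda>x. p + t *\<^sub>R x) ` interior C) = t ^ DIM('a) * measure lebesgue C" for p
  proof -
    have "(\<lambda>x. p + t *\<^sub>R x) ` interior C = (\<lambda>x. t *\<^sub>R x + p) ` interior C"
      by (simp add: add.commute)
    then show ?thesis
      using assms(5) measure_lebesgue_affine[of t p "interior C"]
        measure_interior[OF compact_imp_bounded[OF assms(2)] negligible_convex_frontier[OF assms(1)]]
      by simp
  qed
  moreover have "(\<lambda>x. p + t *\<^sub>R x) ` interior C \<inter> (\<lambda>x. q + t *\<^sub>R x) ` interior C = {}"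
    if "p \<in> S" "q \<in> S" "p \<noteq> q" for p q
    using translates_interior_disjoint[OF assms(1,3,5) assms(6)[OF that]] .
  ultimately show ?thesis
    using assms(4) by (subst measure_negligible_finite_Union_image) (auto simp: pairwise_def)
qed

lemma measure_le_of_midpoints_negations_subset:
  fixes U D :: "'a::euclidean_space set"
  assumes "open U" "bounded U" "compact D" "0 \<le> \<rho>"
    and "midpoints U (uminus ` U) \<subseteq> (\<lambda>x. \<rho> *\<^sub>R x) ` D"
  shows "measure lebesgue U \<le> \<rho> ^ DIM('a) * measure lebesgue D"
proof -
  have "open (uminus ` U)" "bounded (uminus ` U)"
    using assms(1,2) open_negations bounded_scaling[of U "-1"] by auto
  moreover have "measure lebesgue (uminus ` U) = measure lebesgue U"
    using measure_lebesgue_affine[of "-1" 0 U] by simp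
  ultimately have "measure lebesgue U \<le> measure lebesgue (midpoints U (uminus ` U))"
    using min_measure_le_measure_midpoints[OF assms(1,2)] by (metis min.idem)
  also have "\<dots> \<le> measure lebesgue ((\<lambda>x. \<rho> *\<^sub>R x) ` D)"
    using assms \<open>bounded (uminus ` U)\<close>
    by (intro measure_mono_fmeasurable fmeasurableD lmeasurable_compact compact_scaling lmeasurable_open
        open_midpoints bounded_midpoints)
  also have "\<dots> = \<rho> ^ DIM('a) * measure lebesgue D"
    using measure_lebesgue_affine[of \<rho> 0 D] assms(4) by simp
  finally show ?thesis .
qed

lemma card_mult_measure_le_packing:
  fixes C D :: "'a::euclidean_space set"
  assumes C: "convex C" "compact C" "0 \<in> interior C" "\<And>x. x \<in> C \<Longrightarrow> - x \<in> C"
    and D: "convex D" "compact D" "C \<subseteq> D"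
    and S: "finite S" and "0 < \<delta>" "0 \<le> lam"
    and sep: "\<And>p q. p \<in> S \<Longrightarrow> q \<in> S \<Longrightarrow> p \<noteq> q \<Longrightarrow> \<delta> \<le> gauge_norm C (p - q)"
    and diam: "\<And>p q. p \<in> S \<Longrightarrow> q \<in> S \<Longrightarrow> p \<noteq> q \<Longrightarrow> gauge_norm D (p - q) \<le> lam * \<delta>"
  shows "real (card S) * measure lebesgue C \<le> (lam + 1) ^ DIM('a) * measure lebesgue D"
proof -
  define t where "t = \<delta> / 2"
  define U where "U = (\<Union>p\<in>S. (\<lambda>x. p + t *\<^sub>R x) ` interior C)"
  have "0 < t"
    using \<open>0 < \<delta>\<close> by (simp add: t_def)
  have "open U"
    unfolding U_def using \<open>0 < t\<close> by (intro open_UN ballI open_affinity open_interior) auto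
  have "U \<subseteq> (\<Union>p\<in>S. (\<lambda>x. p + t *\<^sub>R x) ` C)"
    unfolding U_def using interior_subset by blast
  moreover have "compact (\<Union>p\<in>S. (\<lambda>x. p + t *\<^sub>R x) ` C)"
    using S C(2) by (intro compact_UN compact_continuous_image continuous_intros)
  ultimately have "bounded U"
    using bounded_subset compact_imp_bounded by blast
  \<comment> \<open>The slack \<open>\<eta>\<close> turns the bound on \<open>D\<close>-distances into the strict one that
    \<open>gauge_norm_less_imp_mem\<close> needs; it disappears in the limit.\<close>
  have bound: "measure lebesgue U \<le> (lam * \<delta> / 2 + t + \<eta>) ^ DIM('a) * measure lebesgue D"
    if "0 < \<eta>" for \<eta>
  proof (rule measure_le_of_midpoints_negations_subset[OF \<open>open U\<close> \<open>bounded U\<close> D(2)])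
    show "0 \<le> lam * \<delta> / 2 + t + \<eta>"
      using \<open>0 \<le> lam\<close> \<open>0 < \<delta>\<close> \<open>0 < t\<close> \<open>0 < \<eta>\<close> by simp
    have "midpoints U (uminus ` U) \<subseteq> (\<lambda>x. ((lam * \<delta> + 2 * \<eta>) / 2 + t) *\<^sub>R x) ` D"
    proof (rule subset_trans[OF midpoints_mono midpoints_translates_subset[OF C(1,4) D(1,3)]])
      show "U \<subseteq> (\<Union>p\<in>S. (\<lambda>x. p + t *\<^sub>R x) ` C)"
        "uminus ` U \<subseteq> uminus ` (\<Union>p\<in>S. (\<lambda>x. p + t *\<^sub>R x) ` C)"
        unfolding U_def using interior_subset by blast+
      show "0 \<in> interior D"
        using C(3) D(3) interior_mono by blast
      show "gauge_norm D (p - q) < lam * \<delta> + 2 * \<eta>" if "p \<in> S" "q \<in> S" "p \<noteq> q" for p q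
        using diam[OF that] \<open>0 < \<eta>\<close> by simp
    qed (use \<open>0 < t\<close> \<open>0 \<le> lam\<close> \<open>0 < \<delta>\<close> \<open>0 < \<eta>\<close> in \<open>auto intro: add_nonneg_pos\<close>)
    then show "midpoints U (uminus ` U) \<subseteq> (\<lambda>x. (lam * \<delta> / 2 + t + \<eta>) *\<^sub>R x) ` D"
      by (simp add: add_divide_distrib ac_simps)
  qed
  have "lam * \<delta> / 2 + t = (lam + 1) * t"
    by (simp add: t_def algebra_simps)
  have "measure lebesgue U \<le> ((lam + 1) * t) ^ DIM('a) * measure lebesgue D"
    using bound unfolding \<open>lam * \<delta> / 2 + t = (lam + 1) * t\<close> by (rule le_power_mult_of_forall_pos)
  moreover have "measure lebesgue U = real (card S) * (t ^ DIM('a) * measure lebesgue C)"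
    unfolding U_def using C(1,2,4) S \<open>0 < t\<close>
  proof (rule measure_Union_translates_interior)
    show "2 * t \<le> gauge_norm C (p - q)" if "p \<in> S" "q \<in> S" "p \<noteq> q" for p q
      using sep[OF that] by (simp add: t_def)
  qed
  ultimately have "t ^ DIM('a) * (real (card S) * measure lebesgue C)
                     \<le> t ^ DIM('a) * ((lam + 1) ^ DIM('a) * measure lebesgue D)"
    by (simp add: power_mult_distrib ac_simps)
  then show ?thesis
    using \<open>0 < t\<close> by (simp add: mult_le_cancel_left_pos)
qed

lemma neg_mem_sym_inter: "x \<in> sym_inter K \<Longrightarrow> - x \<in> sym_inter K"
  unfolding sym_inter_def by (auto simp: image_iff)

lemma convex_sym_inter: "convex K \<Longrightarrow> convex (sym_inter K)"
  unfolding sym_inter_def by (intro convex_Int convex_negations)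

lemma compact_sym_inter: "compact K \<Longrightarrow> compact (sym_inter K)"
  unfolding sym_inter_def by (simp add: compact_Int_closed compact_imp_closed compact_negations)

lemma zero_in_interior_sym_inter: "0 \<in> interior K \<Longrightarrow> 0 \<in> interior (sym_inter K)"
  unfolding sym_inter_def interior_Int interior_negations by force

lemma half_diff_eq_differences: "half_diff K = (\<lambda>x. (1/2::real) *\<^sub>R x) ` (\<Union>x\<in>K. \<Union>y\<in>K. {x - y})"
  unfolding half_diff_def by (rule arg_cong[where f = "image _"]) blast

lemma convex_half_diff: "convex K \<Longrightarrow> convex (half_diff K)"
  unfolding half_diff_eq_differences by (intro convex_scaling convex_differences)

lemma compact_half_diff: "compact K \<Longrightarrow> compact (half_diff K)"
  unfolding half_diff_def by (intro compact_scaling compact_differences)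

lemma sym_inter_subset_half_diff: "sym_inter K \<subseteq> half_diff K"
proof
  fix x assume "x \<in> sym_inter K"
  then have "x \<in> K" "- x \<in> K"
    using neg_mem_sym_inter[of x K] by (simp_all add: sym_inter_def)
  moreover have "x = (1/2::real) *\<^sub>R (x - - x)"
    by (simp add: scaleR_2 flip: scaleR_2)
  ultimately show "x \<in> half_diff K"
    unfolding half_diff_def by blast
qed

lemma admissible_separation:
  fixes K :: "'a::euclidean_space set"
  assumes "finite S" "admissible K lam S" "bounded (sym_inter K)" "0 \<in> interior (sym_inter K)"
  obtains \<delta> where "0 < \<delta>"
    "\<And>p q. p \<in> S \<Longrightarrow> q \<in> S \<Longrightarrow> p \<noteq> q \<Longrightarrow> \<delta> \<le> gauge_norm (sym_inter K) (p - q)"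
    "\<And>p q. p \<in> S \<Longrightarrow> q \<in> S \<Longrightarrow> p \<noteq> q \<Longrightarrow> gauge_norm (half_diff K) (p - q) \<le> lam * \<delta>"
proof (cases "\<exists>p\<in>S. \<exists>q\<in>S. p \<noteq> q")
  case False
  then show ?thesis
    using that[of 1] by auto
next
  case True
  define P where "P = {(p, q). p \<in> S \<and> q \<in> S \<and> p \<noteq> q}"
  define \<delta> where "\<delta> = Min ((\<lambda>(p, q). gauge_norm (sym_inter K) (p - q)) ` P)"
  have "finite P"
    using assms(1) by (intro finite_subset[of P "S \<times> S"]) (auto simp: P_def)
  moreover have "P \<noteq> {}"
    using True by (auto simp: P_def)
  ultimately have "\<delta> \<in> (\<lambda>(p, q). gauge_norm (sym_inter K) (p - q)) ` P"
    unfolding \<delta>_def by (intro Min_in) auto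
  then obtain r s where rs: "r \<in> S" "s \<in> S" "r \<noteq> s" "\<delta> = gauge_norm (sym_inter K) (r - s)"
    unfolding P_def by auto
  show ?thesis
  proof (rule that)
    show "0 < \<delta>"
      unfolding rs(4) using assms(3,4) rs(3) by (intro gauge_norm_pos) auto
    show "\<delta> \<le> gauge_norm (sym_inter K) (p - q)" if "p \<in> S" "q \<in> S" "p \<noteq> q" for p q
      unfolding \<delta>_def using \<open>finite P\<close> that by (intro Min_le) (auto simp: P_def)
    show "gauge_norm (half_diff K) (p - q) \<le> lam * \<delta>" if "p \<in> S" "q \<in> S" "p \<noteq> q" for p q
      using assms(2) that rs unfolding admissible_def by blast
  qed
qed

theorem lemma13:
  fixes K :: "'a::euclidean_space set" and lam :: real
  assumes "convex_body K" and "0 \<in> interior K" and "lam > 0"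
  shows "\<forall>S. finite S \<and> admissible K lam S \<longrightarrow>
           real (card S) \<le> (lam + 1) ^ DIM('a) *
             (measure lebesgue (half_diff K) / measure lebesgue (sym_inter K))"
proof (intro allI impI, elim conjE)
  fix S :: "'a set"
  assume S: "finite S" "admissible K lam S"
  have K: "compact K" "convex K"
    using assms(1) by (simp_all add: convex_body_def)
  note C = convex_sym_inter[OF K(2)] compact_sym_inter[OF K(1)]
    zero_in_interior_sym_inter[OF assms(2)] neg_mem_sym_inter
  note D = convex_half_diff[OF K(2)] compact_half_diff[OF K(1)] sym_inter_subset_half_diff
  obtain \<delta> where \<delta>: "0 < \<delta>"
    "\<And>p q. p \<in> S \<Longrightarrow> q \<in> S \<Longrightarrow> p \<noteq> q \<Longrightarrow> \<delta> \<le> gauge_norm (sym_inter K) (p - q)"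
    "\<And>p q. p \<in> S \<Longrightarrow> q \<in> S \<Longrightarrow> p \<noteq> q \<Longrightarrow> gauge_norm (half_diff K) (p - q) \<le> lam * \<delta>"
    using admissible_separation[OF S compact_imp_bounded[OF C(2)] C(3)] by blast
  have "real (card S) * measure lebesgue (sym_inter K) \<le> (lam + 1) ^ DIM('a) * measure lebesgue (half_diff K)"
    using assms(3) by (intro card_mult_measure_le_packing[OF C D S(1) \<delta>(1) _ \<delta>(2,3)]) auto
  moreover have "0 < measure lebesgue (sym_inter K)"
    using C(2,3) by (intro measure_pos_of_interior_nonempty lmeasurable_compact) auto
  ultimately show "real (card S) \<le> (lam + 1) ^ DIM('a) *
      (measure lebesgue (half_diff K) / measure lebesgue (sym_inter K))"
    by (simp add: pos_le_divide_eq)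
qed

end
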